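(* If $r\ge 4$ then $\pi\ge\min\{2(n-q-2m),\,3(n-2q-m+1)\}$.
   Context: $G$ is a set of size $n$ and $G(\circ)$, $G(\ast)$ are distinct groups on $G$ with the same identity element. $\mathrm{diff}(\circ,\ast)=\{(a,b):a\circ b\ne a\ast b\}$, $\mathrm{dist}(\circ,\ast)=|\mathrm{diff}(\circ,\ast)|$, $\mathrm{dist}_a=|\{b:a\circ b\ne a\ast b\}|$; $H=\{a:\mathrm{dist}_a=0\}$, $h=|H|$; $K=\{a:\mathrm{dist}_a<n/3\}$, $k=|K|$; $m=\min\{\mathrm{dist}_a:\mathrm{dist}_a>0\}$. Standing assumption: $m\ge 3$. Let $q=\lceil n/3\rceil$ and the profit $\pi=\mathrm{dist}(\circ,\ast)-((k-h)m+(n-k)q)$. Let $R=\{(a,a)\in\mathrm{diff}(\circ,\ast):a\in K\}$, $r=|R|$. *)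

theory Defs
  imports Complex_Main "HOL-Algebra.Group"
begin

text \<open>Two binary operations f (written \<circ> in the paper) and g (written \<ast>) on a carrier G.\<close>

definition diff_set :: "'a set \<Rightarrow> ('a \<Rightarrow> 'a \<Rightarrow> 'a) \<Rightarrow> ('a \<Rightarrow> 'a \<Rightarrow> 'a) \<Rightarrow> ('a \<times> 'a) set" where
  "diff_set G f g = {(a, b). a \<in> G \<and> b \<in> G \<and> f a b \<noteq> g a b}"

definition dist_ops :: "'a set \<Rightarrow> ('a \<Rightarrow> 'a \<Rightarrow> 'a) \<Rightarrow> ('a \<Rightarrow> 'a \<Rightarrow> 'a) \<Rightarrow> nat" where
  "dist_ops G f g = card (diff_set G f g)"

definition dist_row :: "'a set \<Rightarrow> ('a \<Rightarrow> 'a \<Rightarrow> 'a) \<Rightarrow> ('a \<Rightarrow> 'a \<Rightarrow> 'a) \<Rightarrow> 'a \<Rightarrow> nat" where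
  "dist_row G f g a = card {b \<in> G. f a b \<noteq> g a b}"

definition H_set :: "'a set \<Rightarrow> ('a \<Rightarrow> 'a \<Rightarrow> 'a) \<Rightarrow> ('a \<Rightarrow> 'a \<Rightarrow> 'a) \<Rightarrow> 'a set" where
  "H_set G f g = {a \<in> G. dist_row G f g a = 0}"

definition K_set :: "'a set \<Rightarrow> ('a \<Rightarrow> 'a \<Rightarrow> 'a) \<Rightarrow> ('a \<Rightarrow> 'a \<Rightarrow> 'a) \<Rightarrow> 'a set" where
  "K_set G f g = {a \<in> G. real (dist_row G f g a) < real (card G) / 3}"

definition m_val :: "'a set \<Rightarrow> ('a \<Rightarrow> 'a \<Rightarrow> 'a) \<Rightarrow> ('a \<Rightarrow> 'a \<Rightarrow> 'a) \<Rightarrow> nat" where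
  "m_val G f g = Min {dist_row G f g a | a. a \<in> G \<and> dist_row G f g a > 0}"

definition q_val :: "'a set \<Rightarrow> nat" where
  "q_val G = nat \<lceil>real (card G) / 3\<rceil>"

definition profit :: "'a set \<Rightarrow> ('a \<Rightarrow> 'a \<Rightarrow> 'a) \<Rightarrow> ('a \<Rightarrow> 'a \<Rightarrow> 'a) \<Rightarrow> int" where
  "profit G f g = int (dist_ops G f g)
     - ((int (card (K_set G f g)) - int (card (H_set G f g))) * int (m_val G f g)
        + (int (card G) - int (card (K_set G f g))) * int (q_val G))"

definition R_set :: "'a set \<Rightarrow> ('a \<Rightarrow> 'a \<Rightarrow> 'a) \<Rightarrow> ('a \<Rightarrow> 'a \<Rightarrow> 'a) \<Rightarrow> ('a \<times> 'a) set" where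
  "R_set G f g = {(a, a) | a. a \<in> K_set G f g \<and> (a, a) \<in> diff_set G f g}"

end

theory Submission
  imports Defs
begin

text \<open>The profit is a sum over rows of nonnegative terms dist_a minus the lower bound 0, m or q
  charged to row a. Rows satisfy a triangle inequality n \<le> dist_a + dist_b + dist_(a \<circ> b) whenever
  a \<circ> b \<noteq> a \<ast> b. Let a be a row of minimal distance d among the r \<ge> 4 rows of K with
  a \<circ> a \<noteq> a \<ast> a. Then a \<circ> a and a \<ast> a are two further rows, outside K, of distance at least
  n - 2d, so \<pi> \<ge> 4(d - m) + 2(n - 2d - q) = 2(n - q - 2m).\<close>

lemma card_le_dist_row_add:
  assumes fin: "finite G"
    and gf: "group \<lparr>carrier = G, mult = f, one = e\<rparr>"
    and gg: "group \<lparr>carrier = G, mult = g, one = e'\<rparr>"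
    and a: "a \<in> G" and b: "b \<in> G" and ne: "f a b \<noteq> g a b"
  shows "card G \<le> dist_row G f g a + dist_row G f g b + dist_row G f g (f a b)"
proof -
  interpret F: group "\<lparr>carrier = G, mult = f, one = e\<rparr>" by (fact gf)
  interpret Gr: group "\<lparr>carrier = G, mult = g, one = e'\<rparr>" by (fact gg)
  have f_closed: "f x y \<in> G" if "x \<in> G" "y \<in> G" for x y using F.m_closed that by simp
  define A where "A = {c \<in> G. f a (f b c) \<noteq> g a (f b c)}"
  define B where "B = {c \<in> G. f b c \<noteq> g b c}"
  define C where "C = {c \<in> G. f (f a b) c \<noteq> g (f a b) c}"
  have cover: "G \<subseteq> A \<union> B \<union> C"
  proof
    fix c assume c: "c \<in> G"
    show "c \<in> A \<union> B \<union> C"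
    proof (rule ccontr)
      assume "c \<notin> A \<union> B \<union> C"
      \<comment> \<open>then (a \<ast> b) \<ast> c = a \<ast> (b \<ast> c) = a \<ast> (b \<circ> c) = a \<circ> (b \<circ> c) = (a \<circ> b) \<circ> c = (a \<circ> b) \<ast> c\<close>
      then have "g (g a b) c = g (f a b) c"
        using c a b f_closed Gr.m_assoc F.m_assoc unfolding A_def B_def C_def by auto
      then have "g a b = f a b"
        using Gr.right_cancel c a b f_closed Gr.m_closed by simp
      with ne show False by simp
    qed
  qed
  have "card A \<le> dist_row G f g a"
  proof -
    have "inj_on (f b) A"
    proof (rule inj_onI)
      fix y z assume "y \<in> A" "z \<in> A" "f b y = f b z"
      then show "y = z" using F.Units_l_cancel[of b y z] F.Units_eq b unfolding A_def
        by (metis (no_types, lifting) mem_Collect_eq partial_object.select_convs(1) monoid.select_convs(1))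
    qed
    then have "card A = card (f b ` A)" by (simp add: card_image)
    also have "\<dots> \<le> card {c \<in> G. f a c \<noteq> g a c}"
      using b f_closed fin unfolding A_def by (intro card_mono) auto
    finally show ?thesis unfolding dist_row_def .
  qed
  moreover have "card G \<le> card A + card B + card C"
  proof -
    have "finite (A \<union> B \<union> C)" using fin unfolding A_def B_def C_def by simp
    then have "card G \<le> card (A \<union> B \<union> C)" using cover by (rule card_mono)
    then show ?thesis using card_Un_le[of "A \<union> B" C] card_Un_le[of A B] by linarith
  qed
  ultimately show ?thesis unfolding dist_row_def B_def C_def by linarith
qed

corollary card_le_dist_row_square:
  assumes "finite G"
    and "group \<lparr>carrier = G, mult = f, one = e\<rparr>"
    and "group \<lparr>carrier = G, mult = g, one = e'\<rparr>"
    and "a \<in> G" and "f a a \<noteq> g a a"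
  shows "card G \<le> 2 * dist_row G f g a + dist_row G f g (f a a)"
  using card_le_dist_row_add[OF assms(1-4) assms(4-5)] by simp

lemma dist_row_swap: "dist_row G g f = dist_row G f g"
  by (simp add: dist_row_def fun_eq_iff eq_commute)

lemma K_set_swap: "K_set G g f = K_set G f g"
  by (simp add: K_set_def dist_row_swap)

lemma dist_row_pos:
  assumes "finite G" and "a \<in> G" and "b \<in> G" and "f a b \<noteq> g a b"
  shows "0 < dist_row G f g a"
  using assms unfolding dist_row_def by (subst card_gt_0_iff) auto

lemma dist_ops_eq_sum_dist_row:
  assumes "finite G"
  shows "dist_ops G f g = (\<Sum>a\<in>G. dist_row G f g a)"
proof -
  have "diff_set G f g = Sigma G (\<lambda>a. {b \<in> G. f a b \<noteq> g a b})"
    unfolding diff_set_def by auto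
  then show ?thesis
    unfolding dist_ops_def dist_row_def using assms by simp
qed

lemma m_val_le_dist_row:
  assumes "finite G" and "a \<in> G" and "0 < dist_row G f g a"
  shows "m_val G f g \<le> dist_row G f g a"
  unfolding m_val_def using assms by (intro Min_le) auto

lemma q_val_le_dist_row:
  assumes "a \<in> G" and "a \<notin> K_set G f g"
  shows "q_val G \<le> dist_row G f g a"
proof -
  have "real (card G) / 3 \<le> real (dist_row G f g a)"
    using assms unfolding K_set_def by auto
  then have "\<lceil>real (card G) / 3\<rceil> \<le> int (dist_row G f g a)"
    by (simp add: ceiling_le)
  then show ?thesis unfolding q_val_def by linarith
qed

lemma H_set_subset_K_set:
  assumes "finite G"
  shows "H_set G f g \<subseteq> K_set G f g"
proof
  fix a assume "a \<in> H_set G f g"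
  then have "a \<in> G" and "dist_row G f g a = 0" unfolding H_set_def by auto
  moreover from \<open>a \<in> G\<close> have "card G > 0" using assms card_gt_0_iff by blast
  ultimately show "a \<in> K_set G f g" unfolding K_set_def by auto
qed

definition row_profit :: "'a set \<Rightarrow> ('a \<Rightarrow> 'a \<Rightarrow> 'a) \<Rightarrow> ('a \<Rightarrow> 'a \<Rightarrow> 'a) \<Rightarrow> 'a \<Rightarrow> int" where
  "row_profit G f g a = int (dist_row G f g a) -
     (if a \<in> H_set G f g then 0 else if a \<in> K_set G f g then int (m_val G f g) else int (q_val G))"

lemma profit_eq_sum_row_profit:
  assumes fin: "finite G"
  shows "profit G f g = (\<Sum>a\<in>G. row_profit G f g a)"
proof -
  define H K m q where "H = H_set G f g" and "K = K_set G f g"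
    and "m = int (m_val G f g)" and "q = int (q_val G)"
  define w where "w a = (if a \<in> H then 0 else if a \<in> K then m else q)" for a
  have HK: "H \<subseteq> K" unfolding H_def K_def using H_set_subset_K_set[OF fin] .
  have KG: "K \<subseteq> G" unfolding K_def K_set_def by auto
  have finK: "finite K" using KG fin by (rule finite_subset)
  have "(\<Sum>a\<in>G. w a) = (\<Sum>a\<in>G - K. w a) + (\<Sum>a\<in>K - H. w a) + (\<Sum>a\<in>H. w a)"
    using sum.subset_diff[OF KG fin, of w] sum.subset_diff[OF HK finK, of w] by (simp add: add.assoc)
  also have "\<dots> = (\<Sum>a\<in>G - K. q) + (\<Sum>a\<in>K - H. m)"
  proof -
    have "(\<Sum>a\<in>G - K. w a) = (\<Sum>a\<in>G - K. q)" using HK unfolding w_def by (intro sum.cong) auto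
    moreover have "(\<Sum>a\<in>K - H. w a) = (\<Sum>a\<in>K - H. m)" unfolding w_def by (intro sum.cong) auto
    moreover have "(\<Sum>a\<in>H. w a) = 0" unfolding w_def by simp
    ultimately show ?thesis by simp
  qed
  also have "\<dots> = (int (card K) - int (card H)) * m + (int (card G) - int (card K)) * q"
    using card_Diff_subset[OF finK KG] card_Diff_subset[OF finite_subset[OF HK finK] HK]
      card_mono[OF finK HK] card_mono[OF fin KG] by (simp add: algebra_simps)
  finally have "(\<Sum>a\<in>G. w a) = (int (card K) - int (card H)) * m + (int (card G) - int (card K)) * q" .
  moreover have "row_profit G f g a = int (dist_row G f g a) - w a" for a
    unfolding row_profit_def w_def H_def K_def m_def q_def ..
  ultimately show ?thesis
    unfolding profit_def dist_ops_eq_sum_dist_row[OF fin]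
      H_def[symmetric] K_def[symmetric] m_def[symmetric] q_def[symmetric]
    by (simp add: sum_subtractf)
qed

lemma row_profit_nonneg:
  assumes "finite G" and "a \<in> G"
  shows "0 \<le> row_profit G f g a"
  using assms m_val_le_dist_row[OF assms] q_val_le_dist_row[OF assms(2)]
  unfolding row_profit_def H_set_def by auto

lemma sum_row_profit_le_profit:
  assumes "finite G" and "T \<subseteq> G"
  shows "(\<Sum>a\<in>T. row_profit G f g a) \<le> profit G f g"
  unfolding profit_eq_sum_row_profit[OF assms(1)]
  using assms row_profit_nonneg[OF assms(1)] by (intro sum_mono2) auto

lemma row_profit_outside_K_set:
  assumes "finite G" and "a \<notin> K_set G f g"
  shows "row_profit G f g a = int (dist_row G f g a) - int (q_val G)"
  using assms H_set_subset_K_set[OF assms(1)] unfolding row_profit_def by auto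

lemma row_profit_in_K_set:
  assumes "a \<in> K_set G f g" and "0 < dist_row G f g a"
  shows "row_profit G f g a = int (dist_row G f g a) - int (m_val G f g)"
  using assms unfolding row_profit_def H_set_def by auto

lemma row_profit_swap: "row_profit G g f = row_profit G f g"
  by (simp add: fun_eq_iff row_profit_def H_set_def K_set_swap m_val_def dist_row_swap)

lemma sum_row_profit_ge:
  assumes "\<And>b. b \<in> S \<Longrightarrow> b \<in> K_set G f g \<and> 0 < dist_row G f g b \<and> d \<le> dist_row G f g b"
  shows "int (card S) * (int d - int (m_val G f g)) \<le> (\<Sum>b\<in>S. row_profit G f g b)"
proof -
  have "(\<Sum>b\<in>S. int d - int (m_val G f g)) \<le> (\<Sum>b\<in>S. row_profit G f g b)"
    using assms row_profit_in_K_set by (intro sum_mono) fastforce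
  then show ?thesis by simp
qed

lemma square_row_profit_ge:
  assumes fin: "finite G"
    and gf: "group \<lparr>carrier = G, mult = f, one = e\<rparr>"
    and gg: "group \<lparr>carrier = G, mult = g, one = e'\<rparr>"
    and aK: "a \<in> K_set G f g" and ne: "f a a \<noteq> g a a"
  shows "f a a \<notin> K_set G f g"
    and "int (card G) - 2 * int (dist_row G f g a) - int (q_val G) \<le> row_profit G f g (f a a)"
proof -
  have a: "a \<in> G" and small: "real (dist_row G f g a) < real (card G) / 3"
    using aK unfolding K_set_def by auto
  have tri: "card G \<le> 2 * dist_row G f g a + dist_row G f g (f a a)"
    using card_le_dist_row_square[OF fin gf gg a ne] .
  then show notin: "f a a \<notin> K_set G f g"
    using small unfolding K_set_def by auto
  show "int (card G) - 2 * int (dist_row G f g a) - int (q_val G) \<le> row_profit G f g (f a a)"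
    using tri row_profit_outside_K_set[OF fin notin] by linarith
qed

lemma card_R_set: "card (R_set G f g) = card {a \<in> K_set G f g. f a a \<noteq> g a a}"
proof -
  have "R_set G f g = (\<lambda>a. (a, a)) ` {a \<in> K_set G f g. f a a \<noteq> g a a}"
    unfolding R_set_def diff_set_def K_set_def by auto
  then show ?thesis by (simp add: card_image inj_on_def)
qed

lemma profit_ge_min_diagonal_row:
  fixes G S :: "'a set" and f g :: "'a \<Rightarrow> 'a \<Rightarrow> 'a"
  defines "S \<equiv> {b \<in> K_set G f g. f b b \<noteq> g b b}"
  assumes fin: "finite G"
    and gf: "group \<lparr>carrier = G, mult = f, one = e\<rparr>"
    and gg: "group \<lparr>carrier = G, mult = g, one = e'\<rparr>"
    and aS: "a \<in> S" and a_min: "\<And>b. b \<in> S \<Longrightarrow> dist_row G f g a \<le> dist_row G f g b"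
  shows "int (card S) * (int (dist_row G f g a) - int (m_val G f g))
      + 2 * (int (card G) - 2 * int (dist_row G f g a) - int (q_val G)) \<le> profit G f g"
proof -
  have SG: "S \<subseteq> G" unfolding S_def K_set_def by auto
  have aK: "a \<in> K_set G f g" and ne: "f a a \<noteq> g a a" and ne': "g a a \<noteq> f a a"
    using aS unfolding S_def by auto
  note s = square_row_profit_ge[OF fin gf gg aK ne]
  \<comment> \<open>the swap laws are permutative, so they are instantiated before unfolding\<close>
  note t = square_row_profit_ge[OF fin gg gf,
      unfolded K_set_swap[of G g f] dist_row_swap[of G g f] row_profit_swap[of G g f], OF aK ne']
  have squares_G: "f a a \<in> G" "g a a \<in> G"
    using aK monoid.m_closed[OF group.is_monoid[OF gf], of a a]
      monoid.m_closed[OF group.is_monoid[OF gg], of a a] unfolding K_set_def by auto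
  have "int (card S) * (int (dist_row G f g a) - int (m_val G f g)) \<le> (\<Sum>b\<in>S. row_profit G f g b)"
    using a_min SG dist_row_pos[OF fin] unfolding S_def by (intro sum_row_profit_ge) auto
  moreover have "(\<Sum>b\<in>S \<union> {f a a, g a a}. row_profit G f g b)
      = (\<Sum>b\<in>S. row_profit G f g b) + row_profit G f g (f a a) + row_profit G f g (g a a)"
    using s(1) t(1) ne finite_subset[OF SG fin] unfolding S_def by (simp add: add.assoc)
  moreover have "(\<Sum>b\<in>S \<union> {f a a, g a a}. row_profit G f g b) \<le> profit G f g"
    using SG squares_G by (intro sum_row_profit_le_profit[OF fin]) auto
  ultimately show ?thesis using s(2) t(2) by (simp add: algebra_simps)
qed

text \<open>The proof gives the first bound of the minimum alone.\<close>

theorem lemma9p2: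
  fixes G :: "'a set" and f g :: "'a \<Rightarrow> 'a \<Rightarrow> 'a" and e :: 'a
  assumes "finite G"
    and "group \<lparr>carrier = G, mult = f, one = e\<rparr>"
    and "group \<lparr>carrier = G, mult = g, one = e\<rparr>"
    and "\<exists>a\<in>G. \<exists>b\<in>G. f a b \<noteq> g a b"
    and "m_val G f g \<ge> 3"
    and "card (R_set G f g) \<ge> 4"
  shows "profit G f g \<ge>
    min (2 * (int (card G) - int (q_val G) - 2 * int (m_val G f g)))
        (3 * (int (card G) - 2 * int (q_val G) - int (m_val G f g) + 1))"
proof -
  define d where "d = dist_row G f g"
  define S where "S = {a \<in> K_set G f g. f a a \<noteq> g a a}"
  have card_S: "4 \<le> card S" using assms(6) card_R_set unfolding S_def by metis
  then obtain a where aS: "a \<in> S" and a_min: "\<And>b. b \<in> S \<Longrightarrow> d a \<le> d b"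
    using ex_has_least_nat[of "\<lambda>b. b \<in> S"] by (metis card.empty ex_in_conv not_numeral_le_zero)
  have "m_val G f g \<le> d a"
    using aS dist_row_pos[OF assms(1)] m_val_le_dist_row[OF assms(1)]
    unfolding S_def K_set_def d_def by auto
  then have "4 * (int (d a) - int (m_val G f g)) \<le> int (card S) * (int (d a) - int (m_val G f g))"
    using card_S by (intro mult_right_mono) auto
  moreover have "int (card S) * (int (d a) - int (m_val G f g))
      + 2 * (int (card G) - 2 * int (d a) - int (q_val G)) \<le> profit G f g"
    using profit_ge_min_diagonal_row[OF assms(1-3)] aS a_min unfolding S_def d_def by blast
  ultimately have "2 * (int (card G) - int (q_val G) - 2 * int (m_val G f g)) \<le> profit G f g"
    by (simp add: algebra_simps)
  then show ?thesis by (rule min.coboundedI1)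
qed

end
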